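(* Let $k$ be a difference field of characteristic $0$ and $R=k\{y_1,\ldots,y_n\}$. Any strictly ascending chain of radical well-mixed monomial $\sigma$-ideals in $R$ is finite.
   Context: A difference field is a field $k$ with a ring endomorphism $\sigma$. $R=k\{y_1,\ldots,y_n\}$ is the polynomial ring over $k$ in the variables $\sigma^j(y_i)$ ($1\le i\le n$, $j\ge0$), with $\sigma$ extended naturally. For $p=\sum_i c_ix^i\in\mathbb{N}[x]$ and $a\in R$, $a^p=\prod_i(\sigma^i(a))^{c_i}$; a monomial is $\mathbf{y}^{\mathbf{u}}=y_1^{u_1}\cdots y_n^{u_n}$ with $\mathbf{u}\in\mathbb{N}[x]^n$. A $\sigma$-ideal is an ideal stable under $\sigma$; a monomial $\sigma$-ideal is a $\sigma$-ideal generated (as an ideal/$\sigma$-ideal) by monomials. A $\sigma$-ideal $I$ is well-mixed if $ab\in I$ implies $a\sigma(b)\in I$; radical means radical as an ideal. *)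

theory Defs
  imports Main "HOL-Library.Poly_Mapping"
begin

definition ring_endo :: "('k::comm_ring_1 \<Rightarrow> 'k) \<Rightarrow> bool" where
  "ring_endo s \<longleftrightarrow> (\<forall>a b. s (a + b) = s a + s b) \<and> (\<forall>a b. s (a * b) = s a * s b) \<and> s 1 = 1"

text \<open>The difference polynomial ring k{y_v : v in 'v}: ordinary polynomials over k in the
  variables (v, j), standing for sigma^j(y_v).\<close>

definition shift_mon :: "(('v \<times> nat) \<Rightarrow>\<^sub>0 nat) \<Rightarrow> (('v \<times> nat) \<Rightarrow>\<^sub>0 nat)" where
  "shift_mon m = (\<Sum>x\<in>Poly_Mapping.keys m. Poly_Mapping.single (fst x, Suc (snd x)) (Poly_Mapping.lookup m x))"

definition dsigma :: "('k::comm_ring_1 \<Rightarrow> 'k) \<Rightarrow> ((('v \<times> nat) \<Rightarrow>\<^sub>0 nat) \<Rightarrow>\<^sub>0 'k) \<Rightarrow> ((('v \<times> nat) \<Rightarrow>\<^sub>0 nat) \<Rightarrow>\<^sub>0 'k)" where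
  "dsigma s p = (\<Sum>m\<in>Poly_Mapping.keys p. Poly_Mapping.single (shift_mon m) (s (Poly_Mapping.lookup p m)))"

definition dmonomials :: "((('v \<times> nat) \<Rightarrow>\<^sub>0 nat) \<Rightarrow>\<^sub>0 'k::comm_ring_1) set" where
  "dmonomials = {Poly_Mapping.single m 1 | m. True}"

definition is_ideal :: "'a::comm_ring_1 set \<Rightarrow> bool" where
  "is_ideal I \<longleftrightarrow> 0 \<in> I \<and> (\<forall>a\<in>I. \<forall>b\<in>I. a + b \<in> I) \<and> (\<forall>a\<in>I. \<forall>r. r * a \<in> I)"

definition sigma_ideal :: "('a::comm_ring_1 \<Rightarrow> 'a) \<Rightarrow> 'a set \<Rightarrow> bool" where
  "sigma_ideal S I \<longleftrightarrow> is_ideal I \<and> (\<forall>a\<in>I. S a \<in> I)"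

definition sigma_ideal_gen :: "('a::comm_ring_1 \<Rightarrow> 'a) \<Rightarrow> 'a set \<Rightarrow> 'a set" where
  "sigma_ideal_gen S M = \<Inter>{J. sigma_ideal S J \<and> M \<subseteq> J}"

definition monomial_sigma_ideal ::
  "('k::comm_ring_1 \<Rightarrow> 'k) \<Rightarrow> ((('v \<times> nat) \<Rightarrow>\<^sub>0 nat) \<Rightarrow>\<^sub>0 'k) set \<Rightarrow> bool" where
  "monomial_sigma_ideal s I \<longleftrightarrow>
     sigma_ideal (dsigma s) I \<and> (\<exists>M \<subseteq> dmonomials. I = sigma_ideal_gen (dsigma s) M)"

definition well_mixed :: "('a::comm_ring_1 \<Rightarrow> 'a) \<Rightarrow> 'a set \<Rightarrow> bool" where
  "well_mixed S I \<longleftrightarrow> (\<forall>a b. a * b \<in> I \<longrightarrow> a * S b \<in> I)"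

definition radical_ideal :: "'a::comm_ring_1 set \<Rightarrow> bool" where
  "radical_ideal I \<longleftrightarrow> (\<forall>a (n::nat). n > 0 \<longrightarrow> a ^ n \<in> I \<longrightarrow> a \<in> I)"

end

theory Submission
  imports Defs Complex_Main
begin

text \<open>
  In a radical monomial \<open>\<sigma>\<close>-ideal \<open>I\<close> a monomial lies in \<open>I\<close> iff the squarefree monomial on
  its support does. Well-mixedness turns \<open>x \<sigma>\<^sup>j(y\<^sub>v) \<in> I\<close> into \<open>x \<sigma>\<^sup>j\<^sup>+\<^sup>1(y\<^sub>v) \<in> I\<close>, so a
  squarefree monomial lies in \<open>I\<close> as soon as one does whose support it dominates, i.e. whose
  highest shift of each \<open>y\<^sub>v\<close> is not larger. A strictly ascending chain \<open>I\<^sub>0 \<subset> I\<^sub>1 \<subset> \<dots>\<close>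
  provides squarefree monomials in \<open>I\<^sub>i\<^sub>+\<^sub>1 - I\<^sub>i\<close>; Dickson's lemma applied to their vectors
  of highest shifts yields \<open>i < j\<close> such that the \<open>j\<close>-th dominates the \<open>i\<close>-th, which then
  forces the \<open>j\<close>-th into \<open>I\<^sub>j\<close>.
\<close>

lemma incseq_subseq_nat:
  fixes u :: "nat \<Rightarrow> nat"
  shows "\<exists>f. strict_mono f \<and> incseq (\<lambda>n. u (f n))"
proof -
  obtain f where f: "strict_mono f" "monoseq (\<lambda>n. u (f n))" using seq_monosub by blast
  show ?thesis
  proof (cases "incseq (\<lambda>n. u (f n))")
    case True
    then show ?thesis using f by blast
  next
    case False
    then have dec: "\<And>m n. m \<le> n \<Longrightarrow> u (f n) \<le> u (f m)"
      using f(2) unfolding monoseq_def incseq_def by blast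
    obtain n0 where n0: "u (f n0) = (LEAST x. x \<in> range (\<lambda>n. u (f n)))"
      using LeastI[of "\<lambda>x. x \<in> range (\<lambda>n. u (f n))" "u (f 0)"] by auto
    have "u (f n0) \<le> u (f n)" for n unfolding n0 by (rule Least_le) auto
    then have const: "u (f (n0 + n)) = u (f n0)" for n using dec by (meson antisym le_add1)
    have "strict_mono (\<lambda>n. f (n0 + n))" using f(1) unfolding strict_mono_def by simp
    moreover have "incseq (\<lambda>n. u (f (n0 + n)))" unfolding incseq_def using const by simp
    ultimately show ?thesis by blast
  qed
qed

lemma incseq_subseq_finite:
  fixes u :: "nat \<Rightarrow> 'c \<Rightarrow> nat"
  assumes "finite C"
  shows "\<exists>f. strict_mono f \<and> (\<forall>c\<in>C. incseq (\<lambda>n. u (f n) c))"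
  using assms
proof (induction C rule: finite_induct)
  case empty
  have "strict_mono (id :: nat \<Rightarrow> nat)" by (simp add: strict_mono_def)
  then show ?case by blast
next
  case (insert c C)
  then obtain f where f: "strict_mono f" "\<forall>c\<in>C. incseq (\<lambda>n. u (f n) c)" by blast
  obtain g where g: "strict_mono g" "incseq (\<lambda>n. u (f (g n)) c)"
    using incseq_subseq_nat[of "\<lambda>n. u (f n) c"] by blast
  have "incseq (\<lambda>n. u (f (g n)) c')" if "c' \<in> C" for c'
    using f(2) that g(1) unfolding incseq_def by (simp add: strict_mono_less_eq)
  moreover have "strict_mono (\<lambda>n. f (g n))" using f(1) g(1) by (simp add: strict_mono_def)
  ultimately show ?case using g(2) by (intro exI[of _ "\<lambda>n. f (g n)"]) auto
qed

lemma dickson_pointwise_le: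
  fixes u :: "nat \<Rightarrow> 'c::finite \<Rightarrow> nat"
  shows "\<exists>i j. i < j \<and> (\<forall>c. u i c \<le> u j c)"
proof -
  obtain f where f: "strict_mono f" "\<forall>c. incseq (\<lambda>n. u (f n) c)"
    using incseq_subseq_finite[of UNIV u] by auto
  have "f 0 < f 1" using f(1) by (simp add: strict_mono_def)
  moreover have "\<forall>c. u (f 0) c \<le> u (f 1) c" using f(2) unfolding incseq_def by simp
  ultimately show ?thesis by blast
qed

abbreviation mon :: "('x \<Rightarrow>\<^sub>0 nat) \<Rightarrow> ('x \<Rightarrow>\<^sub>0 nat) \<Rightarrow>\<^sub>0 'k::comm_ring_1"
  where "mon m \<equiv> Poly_Mapping.single m 1"

definition sqfree_mon :: "'x set \<Rightarrow> 'x \<Rightarrow>\<^sub>0 nat" where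
  "sqfree_mon S = (\<Sum>x\<in>S. Poly_Mapping.single x 1)"

lemma lookup_sqfree_mon:
  "finite S \<Longrightarrow> Poly_Mapping.lookup (sqfree_mon S) x = (if x \<in> S then 1 else 0)"
  unfolding sqfree_mon_def by (simp add: lookup_sum lookup_single when_def)

lemma keys_sqfree_mon: "finite S \<Longrightarrow> Poly_Mapping.keys (sqfree_mon S) = S"
  by (auto simp: in_keys_iff lookup_sqfree_mon split: if_splits)

lemma sum_single_lookup_keys:
  "(\<Sum>m\<in>Poly_Mapping.keys p. Poly_Mapping.single m (Poly_Mapping.lookup p m)) = p"
  by (rule poly_mapping_eqI) (simp add: lookup_sum lookup_single when_def in_keys_iff)

lemma mon_power:
  "(mon m :: ('x \<Rightarrow>\<^sub>0 nat) \<Rightarrow>\<^sub>0 'k::comm_ring_1) ^ n = mon (\<Sum>i<n. m)"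
  by (induction n) (simp_all add: mult_single add.commute)

lemma lookup_sum_const: "Poly_Mapping.lookup (\<Sum>i<n. m) x = (n::nat) * Poly_Mapping.lookup m x"
  by (induction n) (simp_all add: lookup_add)

lemma shift_mon_single:
  "shift_mon (Poly_Mapping.single (v, j) (1::nat)) = Poly_Mapping.single (v, Suc j) 1"
  unfolding shift_mon_def by simp

lemma dsigma_mon: "ring_endo s \<Longrightarrow> dsigma s (mon m) = mon (shift_mon m)"
  unfolding dsigma_def ring_endo_def by simp

lemma keys_dsigma_subset: "Poly_Mapping.keys (dsigma s p) \<subseteq> shift_mon ` Poly_Mapping.keys p"
proof
  fix x assume "x \<in> Poly_Mapping.keys (dsigma s p)"
  then have "x \<in> (\<Union>m\<in>Poly_Mapping.keys p.
      Poly_Mapping.keys (Poly_Mapping.single (shift_mon m) (s (Poly_Mapping.lookup p m))))"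
    unfolding dsigma_def using keys_sum by (rule subsetD[rotated])
  then show "x \<in> shift_mon ` Poly_Mapping.keys p"
    by (auto split: if_splits)
qed

context
  fixes I :: "(('x \<Rightarrow>\<^sub>0 nat) \<Rightarrow>\<^sub>0 'k::comm_ring_1) set"
  assumes ideal: "is_ideal I"
begin

lemma ideal_zero: "0 \<in> I"
  and ideal_add: "a \<in> I \<Longrightarrow> b \<in> I \<Longrightarrow> a + b \<in> I"
  and ideal_mult: "a \<in> I \<Longrightarrow> r * a \<in> I"
  using ideal unfolding is_ideal_def by blast+

lemma ideal_sum_mem: "finite A \<Longrightarrow> (\<And>a. a \<in> A \<Longrightarrow> f a \<in> I) \<Longrightarrow> sum f A \<in> I"
  by (induction A rule: finite_induct) (auto intro: ideal_zero ideal_add)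

lemma mem_if_keys_mon_mem:
  assumes "\<And>m. m \<in> Poly_Mapping.keys p \<Longrightarrow> mon m \<in> I"
  shows "p \<in> I"
proof -
  have "Poly_Mapping.single m (Poly_Mapping.lookup p m) \<in> I" if "m \<in> Poly_Mapping.keys p" for m
  proof -
    have "Poly_Mapping.single 0 (Poly_Mapping.lookup p m) * mon m \<in> I"
      using assms that by (intro ideal_mult)
    then show ?thesis by (simp add: mult_single)
  qed
  then have "(\<Sum>m\<in>Poly_Mapping.keys p. Poly_Mapping.single m (Poly_Mapping.lookup p m)) \<in> I"
    by (intro ideal_sum_mem) auto
  then show ?thesis by (simp only: sum_single_lookup_keys)
qed

lemma mon_mem_dvd:
  assumes "mon m \<in> I" and "\<And>x. Poly_Mapping.lookup m x \<le> Poly_Mapping.lookup m' x"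
  shows "mon m' \<in> I"
proof -
  have "m' = m + (m' - m)"
    by (rule poly_mapping_eqI) (simp add: lookup_add lookup_minus assms(2))
  then have "mon m' = mon (m' - m) * mon m" by (metis mult_single mult_1 add.commute)
  then show ?thesis by (metis ideal_mult[OF assms(1)])
qed

lemma mon_mem_if_sqfree_keys_mem:
  assumes "mon (sqfree_mon (Poly_Mapping.keys m)) \<in> I"
  shows "mon m \<in> I"
  using assms by (rule mon_mem_dvd) (auto simp: lookup_sqfree_mon in_keys_iff)

context
  assumes radical: "radical_ideal I"
begin

lemma mon_mem_keys_mono:
  assumes m: "mon m \<in> I" and keys: "Poly_Mapping.keys m \<subseteq> Poly_Mapping.keys m'"
  shows "mon m' \<in> I"
proof -
  define n where "n = Suc (\<Sum>x\<in>Poly_Mapping.keys m. Poly_Mapping.lookup m x)"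
  have "Poly_Mapping.lookup m x \<le> Poly_Mapping.lookup (\<Sum>i<n. m') x" for x
  proof (cases "x \<in> Poly_Mapping.keys m")
    case True
    then have "Poly_Mapping.lookup m x \<le> n"
      unfolding n_def using member_le_sum[OF True, of "Poly_Mapping.lookup m"] by simp
    moreover have "x \<in> Poly_Mapping.keys m'" using True keys by blast
    then have "1 \<le> Poly_Mapping.lookup m' x" by (simp add: in_keys_iff)
    ultimately show ?thesis
      unfolding lookup_sum_const by (metis le_trans mult_le_mono2 nat_mult_1_right)
  next
    case False
    then show ?thesis by (simp add: in_keys_iff)
  qed
  then have "mon m' ^ n \<in> I" unfolding mon_power using mon_mem_dvd[OF m] by blast
  then show ?thesis using radical unfolding radical_ideal_def n_def by blast
qed

lemma mon_mem_iff_sqfree: "mon m \<in> I \<longleftrightarrow> mon (sqfree_mon (Poly_Mapping.keys m)) \<in> I"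
proof
  assume "mon m \<in> I"
  then show "mon (sqfree_mon (Poly_Mapping.keys m)) \<in> I"
    by (rule mon_mem_keys_mono) (simp add: keys_sqfree_mon)
qed (rule mon_mem_if_sqfree_keys_mem)

lemma sqfree_mem_mono:
  "mon (sqfree_mon S) \<in> I \<Longrightarrow> S \<subseteq> T \<Longrightarrow> finite T \<Longrightarrow> mon (sqfree_mon T) \<in> I"
  using mon_mem_keys_mono[of "sqfree_mon S" "sqfree_mon T"]
  by (simp add: keys_sqfree_mon finite_subset)

end

end

lemma sigma_ideal_keys_closure:
  assumes endo: "ring_endo s" and I: "sigma_ideal (dsigma s) I"
  shows "sigma_ideal (dsigma s) {p. \<forall>m\<in>Poly_Mapping.keys p. mon m \<in> I}"
    (is "sigma_ideal _ ?J")
  unfolding sigma_ideal_def is_ideal_def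
proof (intro conjI ballI allI)
  have ideal: "is_ideal I" and sigma: "\<And>a. a \<in> I \<Longrightarrow> dsigma s a \<in> I"
    using I unfolding sigma_ideal_def by blast+
  show "0 \<in> ?J" by simp
  show "a + b \<in> ?J" if "a \<in> ?J" "b \<in> ?J" for a b
    using that keys_add[of a b] by blast
  show "r * a \<in> ?J" if a: "a \<in> ?J" for a r
  proof (clarify)
    fix x assume "x \<in> Poly_Mapping.keys (r * a)"
    then obtain y z where "x = y + z" "z \<in> Poly_Mapping.keys a"
      using keys_mult by blast
    then show "mon x \<in> I" using a ideal_mult[OF ideal, of "mon z" "mon y"] by (simp add: mult_single)
  qed
  show "dsigma s a \<in> ?J" if a: "a \<in> ?J" for a
  proof (clarify)
    fix x assume "x \<in> Poly_Mapping.keys (dsigma s a)"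
    then obtain y where y: "x = shift_mon y" "y \<in> Poly_Mapping.keys a"
      using subsetD[OF keys_dsigma_subset] by blast
    then have "dsigma s (mon y) \<in> I" using a sigma by blast
    then show "mon x \<in> I" by (simp add: y(1) dsigma_mon[OF endo])
  qed
qed

lemma monomial_sigma_ideal_is_ideal: "monomial_sigma_ideal s I \<Longrightarrow> is_ideal I"
  unfolding monomial_sigma_ideal_def sigma_ideal_def by blast

lemma monomial_sigma_ideal_keys_mem:
  fixes s :: "'k::comm_ring_1 \<Rightarrow> 'k"
  assumes endo: "ring_endo s" and I: "monomial_sigma_ideal s I"
    and p: "p \<in> I" "m \<in> Poly_Mapping.keys p"
  shows "mon m \<in> I"
proof -
  obtain M where M: "M \<subseteq> dmonomials" and I_gen: "I = sigma_ideal_gen (dsigma s) M"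
    using I unfolding monomial_sigma_ideal_def by blast
  define J :: "((_ \<Rightarrow>\<^sub>0 nat) \<Rightarrow>\<^sub>0 'k) set"
    where "J = {p. \<forall>m\<in>Poly_Mapping.keys p. mon m \<in> I}"
  have "M \<subseteq> J"
  proof
    fix q assume q: "q \<in> M"
    then obtain m where "q = mon m" using M unfolding dmonomials_def by blast
    moreover have "q \<in> I" using q unfolding I_gen sigma_ideal_gen_def by blast
    ultimately show "q \<in> J" unfolding J_def by simp
  qed
  moreover have "sigma_ideal (dsigma s) J"
    unfolding J_def using sigma_ideal_keys_closure[OF endo] I
    unfolding monomial_sigma_ideal_def by blast
  ultimately have "I \<subseteq> J" unfolding I_gen sigma_ideal_gen_def by blast
  then show ?thesis using p unfolding J_def by blast
qed

context
  fixes s :: "'k::comm_ring_1 \<Rightarrow> 'k" and I :: "((('v \<times> nat) \<Rightarrow>\<^sub>0 nat) \<Rightarrow>\<^sub>0 'k) set"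
  assumes endo: "ring_endo s" and ideal: "is_ideal I" and radical: "radical_ideal I"
    and well_mixed: "well_mixed (dsigma s) I"
begin

lemma sqfree_shift_mem:
  assumes S: "finite S" "mon (sqfree_mon S) \<in> I" and vj: "(v, j) \<in> S"
  shows "mon (sqfree_mon (insert (v, Suc j) (S - {(v, j)}))) \<in> I"
proof -
  define a where "a = sqfree_mon (S - {(v, j)})"
  have "sqfree_mon S = a + Poly_Mapping.single (v, j) 1"
    unfolding a_def sqfree_mon_def using sum.remove[OF S(1) vj] by (simp add: add.commute)
  then have "mon a * mon (Poly_Mapping.single (v, j) 1) \<in> I" using S(2) by (simp add: mult_single)
  then have "mon a * dsigma s (mon (Poly_Mapping.single (v, j) 1)) \<in> I"
    using well_mixed unfolding well_mixed_def by blast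
  then have "mon (a + Poly_Mapping.single (v, Suc j) 1) \<in> I"
    by (simp only: dsigma_mon[OF endo] shift_mon_single mult_single mult_1)
  moreover have "Poly_Mapping.keys (a + Poly_Mapping.single (v, Suc j) 1)
      = insert (v, Suc j) (S - {(v, j)})"
    unfolding a_def using S(1)
    by (auto simp: in_keys_iff lookup_add lookup_sqfree_mon lookup_single when_def split: if_splits)
  ultimately show ?thesis using mon_mem_iff_sqfree[OF ideal radical] by metis
qed

lemma sqfree_raise_mem:
  assumes S: "finite S" "mon (sqfree_mon S) \<in> I" "(v, j) \<in> S" and "j \<le> k"
    and T: "finite T" "S - {(v, j)} \<subseteq> T" "(v, k) \<in> T"
  shows "mon (sqfree_mon T) \<in> I"
  using \<open>j \<le> k\<close> T
proof (induction k arbitrary: T rule: dec_induct)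
  case base
  then have "S \<subseteq> T" using S(3) by blast
  then show ?case using sqfree_mem_mono[OF ideal radical S(2)] base(1) by blast
next
  case (step n)
  define T' where "T' = insert (v, n) (S - {(v, j)})"
  have "finite T'" "S - {(v, j)} \<subseteq> T'" "(v, n) \<in> T'" using S(1) unfolding T'_def by auto
  then have "mon (sqfree_mon T') \<in> I" by (rule step.IH)
  then have "mon (sqfree_mon (insert (v, Suc n) (T' - {(v, n)}))) \<in> I"
    using sqfree_shift_mem \<open>finite T'\<close> \<open>(v, n) \<in> T'\<close> by blast
  moreover have "insert (v, Suc n) (T' - {(v, n)}) \<subseteq> T"
    using step.prems(2,3) unfolding T'_def by blast
  ultimately show ?case using sqfree_mem_mono[OF ideal radical] step.prems(1) by blast
qed

lemma sqfree_mem_if_dominated: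
  assumes S: "finite S" "mon (sqfree_mon S) \<in> I" and T: "finite T"
    and dominated: "\<And>v j. (v, j) \<in> S \<Longrightarrow> \<exists>k\<ge>j. (v, k) \<in> T"
  shows "mon (sqfree_mon T) \<in> I"
proof -
  have "mon (sqfree_mon T) \<in> I"
    if "finite A" "A \<subseteq> S" "mon (sqfree_mon (A \<union> T)) \<in> I" for A
    using that
  proof (induction A rule: finite_induct)
    case empty
    then show ?case by simp
  next
    case (insert x A)
    obtain v j where x: "x = (v, j)" by fastforce
    obtain k where k: "j \<le> k" "(v, k) \<in> T" using dominated insert.prems(1) x by blast
    have "mon (sqfree_mon (A \<union> T)) \<in> I"
      using sqfree_raise_mem[of "insert x A \<union> T" v j k "A \<union> T"] insert k x T by auto
    then show ?case using insert.IH insert.prems(1) by blast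
  qed
  moreover have "mon (sqfree_mon (S \<union> T)) \<in> I"
    using sqfree_mem_mono[OF ideal radical S(2)] S(1) T by blast
  ultimately show ?thesis using S(1) by blast
qed

end

definition shift_height :: "('v \<times> nat) set \<Rightarrow> 'v \<Rightarrow> nat" where
  "shift_height S v = (if \<exists>j. (v, j) \<in> S then Suc (Max {j. (v, j) \<in> S}) else 0)"

lemma dominated_if_shift_height_le:
  fixes S T :: "('v \<times> nat) set"
  assumes S: "finite S" "(v, j) \<in> S" and T: "finite T"
    and le: "shift_height S v \<le> shift_height T v"
  shows "\<exists>k\<ge>j. (v, k) \<in> T"
proof -
  have finite_slice: "finite {j. (v, j) \<in> X}" if "finite X" for X :: "('v \<times> nat) set"
  proof (rule finite_subset)
    show "{j. (v, j) \<in> X} \<subseteq> snd ` X" by force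
  qed (use that in simp)
  have "j \<le> Max {j. (v, j) \<in> S}" using S finite_slice by simp
  moreover have "shift_height S v = Suc (Max {j. (v, j) \<in> S})"
    using S(2) unfolding shift_height_def by auto
  ultimately have "j < shift_height T v" using le by linarith
  then have nonempty: "\<exists>k. (v, k) \<in> T" and
    "j \<le> Max {k. (v, k) \<in> T}" unfolding shift_height_def by (auto split: if_splits)
  moreover have "Max {k. (v, k) \<in> T} \<in> {k. (v, k) \<in> T}"
    using nonempty finite_slice[OF T] by (intro Max_in) auto
  ultimately show ?thesis by blast
qed

lemma sqfree_mon_witness:
  fixes s :: "'k::comm_ring_1 \<Rightarrow> 'k"
  assumes endo: "ring_endo s" and "is_ideal I"
    and J: "radical_ideal J" "monomial_sigma_ideal s J" and "I \<subset> J"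
  shows "\<exists>S. finite S \<and> (mon (sqfree_mon S) :: _ \<Rightarrow>\<^sub>0 'k) \<in> J \<and> mon (sqfree_mon S) \<notin> I"
proof -
  obtain p where p: "p \<in> J" "p \<notin> I" using \<open>I \<subset> J\<close> by blast
  then obtain m where m: "m \<in> Poly_Mapping.keys p" "mon m \<notin> I"
    using mem_if_keys_mon_mem[OF \<open>is_ideal I\<close>] by blast
  have "mon m \<in> J" using monomial_sigma_ideal_keys_mem[OF endo J(2) p(1) m(1)] .
  then have "mon (sqfree_mon (Poly_Mapping.keys m)) \<in> J"
    using mon_mem_iff_sqfree[OF monomial_sigma_ideal_is_ideal[OF J(2)] J(1)] by blast
  moreover have "mon (sqfree_mon (Poly_Mapping.keys m)) \<notin> I"
    using m(2) mon_mem_if_sqfree_keys_mem[OF \<open>is_ideal I\<close>] by blast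
  ultimately show ?thesis by (intro exI[of _ "Poly_Mapping.keys m"]) simp
qed

lemma no_strict_chain_radical_well_mixed:
  fixes s :: "'k::comm_ring_1 \<Rightarrow> 'k"
    and I :: "nat \<Rightarrow> ((('v::finite \<times> nat) \<Rightarrow>\<^sub>0 nat) \<Rightarrow>\<^sub>0 'k) set"
  assumes endo: "ring_endo s" and radical: "\<And>i. radical_ideal (I i)"
    and well_mixed: "\<And>i. well_mixed (dsigma s) (I i)"
    and monomial: "\<And>i. monomial_sigma_ideal s (I i)"
    and chain: "\<And>i. I i \<subset> I (Suc i)"
  shows False
proof -
  have ideal: "is_ideal (I i)" for i using monomial_sigma_ideal_is_ideal monomial .
  obtain S where S: "\<And>i. finite (S i)" "\<And>i. (mon (sqfree_mon (S i)) :: _ \<Rightarrow>\<^sub>0 'k) \<in> I (Suc i)"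
    "\<And>i. (mon (sqfree_mon (S i)) :: _ \<Rightarrow>\<^sub>0 'k) \<notin> I i"
    using sqfree_mon_witness[OF endo ideal radical monomial chain] by metis
  obtain i j where ij: "i < j" "\<And>v. shift_height (S i) v \<le> shift_height (S j) v"
    using dickson_pointwise_le[of "\<lambda>i. shift_height (S i)"] by blast
  have "I (Suc i) \<subseteq> I j" using chain ij(1) by (metis Suc_leI lift_Suc_mono_le less_imp_le)
  then have "(mon (sqfree_mon (S i)) :: _ \<Rightarrow>\<^sub>0 'k) \<in> I j" using S(2) by blast
  then have "(mon (sqfree_mon (S j)) :: _ \<Rightarrow>\<^sub>0 'k) \<in> I j"
    using sqfree_mem_if_dominated[OF endo ideal radical well_mixed S(1)] S(1)
      dominated_if_shift_height_le[OF S(1) _ S(1) ij(2)] by blast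
  with S(3) show False by blast
qed

theorem corollary5p7:
  fixes s :: "'k::{field, ring_char_0} \<Rightarrow> 'k"
  assumes "ring_endo s"
  shows "\<not> (\<exists>I :: nat \<Rightarrow> ((('v::finite \<times> nat) \<Rightarrow>\<^sub>0 nat) \<Rightarrow>\<^sub>0 'k) set.
            (\<forall>i. radical_ideal (I i) \<and> well_mixed (dsigma s) (I i) \<and> monomial_sigma_ideal s (I i))
            \<and> (\<forall>i. I i \<subset> I (Suc i)))"
  using no_strict_chain_radical_well_mixed[OF assms] by blast

end
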